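(* Let $A$ be a deterministic KAT automaton over $(\Sigma_0,T)$ and let $\mathfrak{s}$ assign to each $p\in\Sigma_0$ a deterministic KAT automaton $\mathfrak{s}(p)$ over $(\Sigma_1,T)$. Then $L(\mathsf{compose}^{\mathfrak{s}}(A))=\mathrm{apply}^{\mathfrak{s}'}(L(A))$, where $\mathfrak{s}'(p)=L(\mathfrak{s}(p))$.
   Context: Atoms $\mathsf{At}_T=2^T$. Guarded strings: words in $\mathsf{At}_T(\Sigma\mathsf{At}_T)^*$; guarded composition $w'\alpha\diamond\alpha x'=w'\alpha x'$ (defined only when the last atom of the left string equals the first atom of the right one). For a guarded language $L$ over $(\Sigma_0,T)$ and $\mathfrak{s}'$ mapping each $p\in\Sigma_0$ to a guarded language over $(\Sigma_1,T)$, $\mathrm{apply}^{\mathfrak{s}'}(L)$ is the set of all $\alpha_0\diamond w_0\diamond\alpha_1\diamond\cdots\diamond\alpha_{n-1}\diamond w_{n-1}\diamond\alpha_n$ (defined) where $\alpha_0p_0\alpha_1\cdots p_{n-1}\alpha_n\in L$ and each $w_i\in\mathfrak{s}'(p_i)$. Deterministic KAT automaton over $(\Sigma,T)$: $A=(Q,\delta,\iota)$, $Q$ finite, $\delta:Q\times\mathsf{At}_T\to\{\mathsf{accept},\mathsf{reject}\}+\Sigma\times Q$, $\iota:\mathsf{At}_T\to\{\mathsf{accept},\mathsf{reject}\}+\Sigma\times Q$. $L_A(\gamma)$ is the smallest set with $\gamma(\alpha)=\mathsf{accept}\Rightarrow\alpha\in L_A(\gamma)$ and $\gamma(\alpha)=(p,q)$,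 $w\in L_A(\delta(q,-))\Rightarrow\alpha pw\in L_A(\gamma)$; $L(A)=L_A(\iota)$. $\mathsf{compose}^{\mathfrak{s}}(A)$ for $A=(Q,\delta,\iota)$ and $\mathfrak{s}(p)=(Q_p,\delta_p,\iota_p)$: $\hat\delta(q,\alpha)=\mathsf{accept}$ if $\delta(q,\alpha)=\mathsf{accept}$; $=(p,q')$ if $\delta(q,\alpha)=(p,q')$ and $\iota_p(\alpha)\ne\mathsf{accept}$; $=\hat\delta(q',\alpha)$ if $\delta(q,\alpha)=(p,q')$ and $\iota_p(\alpha)=\mathsf{accept}$; $=\mathsf{reject}$ otherwise (including when the recursion does not terminate). $\hat\iota(\alpha)=\hat\delta(q,\alpha)$ if $\iota(\alpha)=(p,q)$ and $\iota_p(\alpha)=\mathsf{accept}$; else $\hat\iota(\alpha)=\iota(\alpha)$. Then $\mathsf{compose}^{\mathfrak{s}}(A)=(Q',\delta',\iota')$ over $(\Sigma_1,T)$, $Q'=\sum_{p\in\Sigma_0}Q_p\times Q$, with, for $q_p\in Q_p$, $q\in Q$: $\delta'((q_p,q),\alpha)=(p'',(q_p',q))$ if $\delta_p(q_p,\alpha)=(p'',q_p')$; $=(p'',(q_{p'},q'))$ if $\delta_p(q_p,\alpha)=\mathsf{accept}$, $\hat\delta(q,\alpha)=(p',q')$ and $\iota_{p'}(\alpha)=(p'',q_{p'})$; $=\mathsf{accept}$ if $\delta_p(q_p,\alpha)=\mathsf{accept}$ and $\hat\delta(q,\alpha)=\mathsf{accept}$; $=\mathsf{reject}$ otherwise. $\iota'(\alpha)=\mathsf{accept}$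 if $\hat\iota(\alpha)=\mathsf{accept}$; $=(p'',(q_{p'},q))$ if $\hat\iota(\alpha)=(p',q)$ and $\iota_{p'}(\alpha)=(p'',q_{p'})$; $=\mathsf{reject}$ otherwise. *)

theory Defs
  imports Main
begin

(* Atoms At_T = 2^T: with T = UNIV of a finite type 't, atoms are all values of type 't set. *)

datatype ('s, 'q) res = Accept | Reject | Go 's 'q

record ('s, 'q, 't) kat_aut =
  aut_states :: "'q set"
  aut_delta  :: "'q \<Rightarrow> 't set \<Rightarrow> ('s, 'q) res"
  aut_iota   :: "'t set \<Rightarrow> ('s, 'q) res"

definition res_ok :: "'q set \<Rightarrow> ('s, 'q) res \<Rightarrow> bool" where
  "res_ok Q r = (\<forall>p q. r = Go p q \<longrightarrow> q \<in> Q)"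

definition wf_aut :: "('s, 'q, 't) kat_aut \<Rightarrow> bool" where
  "wf_aut A = (finite (aut_states A) \<and>
     (\<forall>q \<in> aut_states A. \<forall>\<alpha>. res_ok (aut_states A) (aut_delta A q \<alpha>)) \<and>
     (\<forall>\<alpha>. res_ok (aut_states A) (aut_iota A \<alpha>)))"

(* Guarded strings  alpha_0 p_0 alpha_1 ... p_{n-1} alpha_n  as (alpha_0, [(p_0,alpha_1),...]) *)
type_synonym ('s, 't) gstr = "'t set \<times> ('s \<times> 't set) list"

definition last_atom :: "('s, 't) gstr \<Rightarrow> 't set" where
  "last_atom w = (if snd w = [] then fst w else snd (last (snd w)))"

definition gcomp :: "('s, 't) gstr \<Rightarrow> ('s, 't) gstr \<Rightarrow> ('s, 't) gstr option" where
  "gcomp u v = (if last_atom u = fst v then Some (fst u, snd u @ snd v) else None)"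

inductive in_lang :: "('q \<Rightarrow> 't set \<Rightarrow> ('s, 'q) res) \<Rightarrow> ('t set \<Rightarrow> ('s, 'q) res)
    \<Rightarrow> ('s, 't) gstr \<Rightarrow> bool"
  for \<delta> where
  acc: "\<gamma> \<alpha> = Accept \<Longrightarrow> in_lang \<delta> \<gamma> (\<alpha>, [])"
| step: "\<gamma> \<alpha> = Go p q \<Longrightarrow> in_lang \<delta> (\<delta> q) (\<beta>, xs)
          \<Longrightarrow> in_lang \<delta> \<gamma> (\<alpha>, (p, \<beta>) # xs)"

definition lang_from :: "('q \<Rightarrow> 't set \<Rightarrow> ('s, 'q) res) \<Rightarrow> ('t set \<Rightarrow> ('s, 'q) res)
    \<Rightarrow> ('s, 't) gstr set" where
  "lang_from \<delta> \<gamma> = {w. in_lang \<delta> \<gamma> w}"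

definition lang :: "('s, 'q, 't) kat_aut \<Rightarrow> ('s, 't) gstr set" where
  "lang A = lang_from (aut_delta A) (aut_iota A)"

(* apply^{s'} on a single guarded string: all defined
   alpha_0 <> w_0 <> alpha_1 <> ... <> w_{n-1} <> alpha_n  with w_i in s'(p_i)
   (right-associated; guarded composition is associative where defined) *)
fun apply_gs :: "('s0 \<Rightarrow> ('s1, 't) gstr set) \<Rightarrow> 't set \<Rightarrow> ('s0 \<times> 't set) list
    \<Rightarrow> ('s1, 't) gstr set" where
  "apply_gs s \<alpha> [] = {(\<alpha>, [])}"
| "apply_gs s \<alpha> ((p, \<beta>) # xs) =
     {r. \<exists>w u v. w \<in> s p \<and> v \<in> apply_gs s \<beta> xs \<and>
                 gcomp (\<alpha>, []) w = Some u \<and> gcomp u v = Some r}"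

definition apply_lang :: "('s0 \<Rightarrow> ('s1, 't) gstr set) \<Rightarrow> ('s0, 't) gstr set \<Rightarrow> ('s1, 't) gstr set" where
  "apply_lang s L = (\<Union>w \<in> L. apply_gs s (fst w) (snd w))"

(* hat-delta: recursion given as the least relation; non-termination yields reject *)
inductive hat_rel :: "('s0, 'q, 't) kat_aut \<Rightarrow> ('s0 \<Rightarrow> ('s1, 'r, 't) kat_aut)
    \<Rightarrow> 'q \<Rightarrow> 't set \<Rightarrow> ('s0, 'q) res \<Rightarrow> bool"
  for A s where
  h_acc: "aut_delta A q \<alpha> = Accept \<Longrightarrow> hat_rel A s q \<alpha> Accept"
| h_go: "aut_delta A q \<alpha> = Go p q' \<Longrightarrow> aut_iota (s p) \<alpha> \<noteq> Accept \<Longrightarrow> hat_rel A s q \<alpha> (Go p q')"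
| h_skip: "aut_delta A q \<alpha> = Go p q' \<Longrightarrow> aut_iota (s p) \<alpha> = Accept \<Longrightarrow> hat_rel A s q' \<alpha> r
           \<Longrightarrow> hat_rel A s q \<alpha> r"
| h_rej: "aut_delta A q \<alpha> = Reject \<Longrightarrow> hat_rel A s q \<alpha> Reject"

definition hat_delta :: "('s0, 'q, 't) kat_aut \<Rightarrow> ('s0 \<Rightarrow> ('s1, 'r, 't) kat_aut)
    \<Rightarrow> 'q \<Rightarrow> 't set \<Rightarrow> ('s0, 'q) res" where
  "hat_delta A s q \<alpha> = (if \<exists>r. hat_rel A s q \<alpha> r then THE r. hat_rel A s q \<alpha> r else Reject)"

definition hat_iota :: "('s0, 'q, 't) kat_aut \<Rightarrow> ('s0 \<Rightarrow> ('s1, 'r, 't) kat_aut)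
    \<Rightarrow> 't set \<Rightarrow> ('s0, 'q) res" where
  "hat_iota A s \<alpha> = (case aut_iota A \<alpha> of
      Go p q \<Rightarrow> (if aut_iota (s p) \<alpha> = Accept then hat_delta A s q \<alpha> else Go p q)
    | r \<Rightarrow> r)"

(* states of compose: the tagged sum  Sum_p Q_p x Q  as triples (p, q_p, q) *)
definition compose :: "('s0 \<Rightarrow> ('s1, 'r, 't) kat_aut) \<Rightarrow> ('s0, 'q, 't) kat_aut
    \<Rightarrow> ('s1, 's0 \<times> 'r \<times> 'q, 't) kat_aut" where
  "compose s A = \<lparr>
     aut_states = {(p, qp, q). qp \<in> aut_states (s p) \<and> q \<in> aut_states A},
     aut_delta = (\<lambda>(p, qp, q) \<alpha>.
        (case aut_delta (s p) qp \<alpha> of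
           Go p'' qp' \<Rightarrow> Go p'' (p, qp', q)
         | Accept \<Rightarrow>
             (case hat_delta A s q \<alpha> of
                Accept \<Rightarrow> Accept
              | Go p' q' \<Rightarrow> (case aut_iota (s p') \<alpha> of
                               Go p'' qp' \<Rightarrow> Go p'' (p', qp', q')
                             | _ \<Rightarrow> Reject)
              | Reject \<Rightarrow> Reject)
         | Reject \<Rightarrow> Reject)),
     aut_iota = (\<lambda>\<alpha>.
        (case hat_iota A s \<alpha> of
           Accept \<Rightarrow> Accept
         | Go p' q \<Rightarrow> (case aut_iota (s p') \<alpha> of
                         Go p'' qp \<Rightarrow> Go p'' (p', qp, q)
                       | _ \<Rightarrow> Reject)
         | Reject \<Rightarrow> Reject)) \<rparr>"

end

theory Submission
  imports Defs
begin

text \<open>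
  A state \<open>(p, q\<^sub>p, q)\<close> of the composed automaton should accept the guarded concatenation of
  the language of \<open>s p\<close> from \<open>q\<^sub>p\<close> with the substituted language of \<open>A\<close> from \<open>q\<close>
  (\<open>resume_lang\<close>). Both this family and the state languages of the composed automaton satisfy the
  same one-step unfolding equations, and these determine a family of languages uniquely, by
  induction on the length of words. The one delicate case is an automaton \<open>s p\<close> that accepts
  immediately at the current atom: it contributes only that atom, so the substitution continues
  from the next state of \<open>A\<close> on the same atom. Iterating this is what \<open>hat_delta\<close> does; the
  iteration diverges only when no substituted word starts with that atom, which justifies the
  junk value \<open>Reject\<close>.
\<close>

lemma last_atom_Nil [simp]: "last_atom (\<alpha>, []) = \<alpha>"
  by (simp add: last_atom_def)

lemma last_atom_Cons [simp]: "last_atom (\<alpha>, (p, \<beta>) # xs) = last_atom (\<beta>, xs)"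
  by (simp add: last_atom_def)

lemma gcomp_eq_Some_iff: "gcomp u v = Some r \<longleftrightarrow> last_atom u = fst v \<and> r = (fst u, snd u @ snd v)"
  by (auto simp: gcomp_def)

definition gconc :: "('s, 't) gstr set \<Rightarrow> ('s, 't) gstr set \<Rightarrow> ('s, 't) gstr set" where
  "gconc L M = {r. \<exists>w\<in>L. \<exists>v\<in>M. gcomp w v = Some r}"

lemma apply_gs_fst: "v \<in> apply_gs S \<alpha> xs \<Longrightarrow> fst v = \<alpha>"
  by (induction S \<alpha> xs arbitrary: v rule: apply_gs.induct) (auto simp: gcomp_def split: if_splits)

lemma apply_gs_Cons_iff:
  "x \<in> apply_gs S \<alpha> ((p, \<beta>) # xs) \<longleftrightarrow>
     (\<exists>w v. w \<in> S p \<and> fst w = \<alpha> \<and> last_atom w = \<beta> \<and> v \<in> apply_gs S \<beta> xs \<and>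
       x = (\<alpha>, snd w @ snd v))"
  (is "?lhs \<longleftrightarrow> ?rhs")
proof
  assume ?lhs
  then obtain w u v where w: "w \<in> S p" and v: "v \<in> apply_gs S \<beta> xs"
    and u: "gcomp (\<alpha>, []) w = Some u" and x: "gcomp u v = Some x"
    by auto
  from u have "fst w = \<alpha>" "u = w"
    by (auto simp: gcomp_eq_Some_iff)
  moreover from this x have "last_atom w = \<beta>" "x = (\<alpha>, snd w @ snd v)"
    using apply_gs_fst[OF v] by (auto simp: gcomp_eq_Some_iff)
  ultimately show ?rhs
    using w v by blast
next
  assume ?rhs
  then obtain w v where "w \<in> S p" "fst w = \<alpha>" "last_atom w = \<beta>" "v \<in> apply_gs S \<beta> xs"
    "x = (\<alpha>, snd w @ snd v)"
    by blast
  moreover from this have "gcomp (\<alpha>, []) w = Some w" "gcomp w v = Some x"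
    by (auto simp: gcomp_eq_Some_iff dest: apply_gs_fst)
  ultimately show ?lhs
    unfolding apply_gs.simps by blast
qed

definition step_lang :: "('t set \<Rightarrow> ('s, 'q) res) \<Rightarrow> ('q \<Rightarrow> ('s, 't) gstr set) \<Rightarrow> ('s, 't) gstr set" where
  "step_lang \<gamma> M = {(\<alpha>, xs). \<gamma> \<alpha> = Accept \<and> xs = [] \<or>
     (\<exists>p q \<beta> ys. \<gamma> \<alpha> = Go p q \<and> xs = (p, \<beta>) # ys \<and> (\<beta>, ys) \<in> M q)}"

lemma step_lang_cong:
  "\<gamma> \<alpha> = \<gamma>' \<alpha> \<Longrightarrow> (\<alpha>, xs) \<in> step_lang \<gamma> M \<longleftrightarrow> (\<alpha>, xs) \<in> step_lang \<gamma>' M"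
  by (simp add: step_lang_def)

lemma lang_from_unfold: "lang_from \<delta> \<gamma> = step_lang \<gamma> (\<lambda>q. lang_from \<delta> (\<delta> q))"
  by (auto simp: lang_from_def step_lang_def elim: in_lang.cases intro: in_lang.intros)

lemma lang_from_unique:
  assumes "\<And>q. M q = step_lang (\<delta> q) M"
  shows "lang_from \<delta> (\<delta> q) = M q"
proof -
  have "(\<alpha>, xs) \<in> lang_from \<delta> (\<delta> q) \<longleftrightarrow> (\<alpha>, xs) \<in> M q" for \<alpha> xs
  proof (induction xs arbitrary: \<alpha> q)
    case Nil
    show ?case by (subst lang_from_unfold, subst assms) (simp add: step_lang_def)
  next
    case (Cons x xs)
    then show ?case by (subst lang_from_unfold, subst assms) (auto simp: step_lang_def)
  qed
  then show ?thesis by auto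
qed

lemma gconc_lang_from_iff:
  "(\<alpha>, xs) \<in> gconc (lang_from \<delta> \<gamma>) M \<longleftrightarrow> \<gamma> \<alpha> = Accept \<and> (\<alpha>, xs) \<in> M \<or>
     (\<exists>p q \<beta> ys. \<gamma> \<alpha> = Go p q \<and> xs = (p, \<beta>) # ys \<and> (\<beta>, ys) \<in> gconc (lang_from \<delta> (\<delta> q)) M)"
  (is "?lhs \<longleftrightarrow> ?rhs")
proof
  assume ?lhs
  then obtain w v where w: "w \<in> lang_from \<delta> \<gamma>" and v: "v \<in> M" and wv: "gcomp w v = Some (\<alpha>, xs)"
    by (auto simp: gconc_def)
  then obtain ws where w_eq: "w = (\<alpha>, ws)" and xs: "xs = ws @ snd v" and la: "last_atom w = fst v"
    by (cases w) (auto simp: gcomp_eq_Some_iff)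
  from w w_eq consider "\<gamma> \<alpha> = Accept" "ws = []"
    | p q \<beta> ys where "\<gamma> \<alpha> = Go p q" "ws = (p, \<beta>) # ys" "(\<beta>, ys) \<in> lang_from \<delta> (\<delta> q)"
    by (subst (asm) lang_from_unfold) (auto simp: step_lang_def)
  then show ?rhs
  proof cases
    case 1
    with v xs la w_eq show ?thesis by (cases v) auto
  next
    case (2 p q \<beta> ys)
    with la w_eq have "gcomp (\<beta>, ys) v = Some (\<beta>, ys @ snd v)"
      by (simp add: gcomp_eq_Some_iff)
    with 2 v xs show ?thesis by (auto simp: gconc_def)
  qed
next
  assume ?rhs
  then show ?lhs
  proof (elim disjE exE conjE)
    assume "\<gamma> \<alpha> = Accept" "(\<alpha>, xs) \<in> M"
    moreover have "(\<alpha>, []) \<in> lang_from \<delta> \<gamma>" "gcomp (\<alpha>, []) (\<alpha>, xs) = Some (\<alpha>, xs)"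
      using \<open>\<gamma> \<alpha> = Accept\<close> by (auto simp: lang_from_unfold[of \<delta> \<gamma>] step_lang_def gcomp_eq_Some_iff)
    ultimately show ?lhs by (auto simp: gconc_def)
  next
    fix p q \<beta> ys
    assume go: "\<gamma> \<alpha> = Go p q" and xs: "xs = (p, \<beta>) # ys"
      and "(\<beta>, ys) \<in> gconc (lang_from \<delta> (\<delta> q)) M"
    then obtain w v where w: "w \<in> lang_from \<delta> (\<delta> q)" and v: "v \<in> M" and wv: "gcomp w v = Some (\<beta>, ys)"
      by (auto simp: gconc_def)
    then have "(\<alpha>, (p, \<beta>) # snd w) \<in> lang_from \<delta> \<gamma>"
      using go by (subst lang_from_unfold) (auto simp: step_lang_def gcomp_eq_Some_iff)
    moreover have "gcomp (\<alpha>, (p, \<beta>) # snd w) v = Some (\<alpha>, xs)"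
      using wv xs by (auto simp: gcomp_eq_Some_iff)
    ultimately show ?lhs
      using v by (auto simp: gconc_def)
  qed
qed

lemma apply_lang_lang_from_iff:
  "(\<alpha>, xs) \<in> apply_lang S (lang_from \<delta> \<gamma>) \<longleftrightarrow> \<gamma> \<alpha> = Accept \<and> xs = [] \<or>
     (\<exists>p q. \<gamma> \<alpha> = Go p q \<and> (\<alpha>, xs) \<in> gconc (S p) (apply_lang S (lang_from \<delta> (\<delta> q))))"
  (is "?lhs \<longleftrightarrow> ?rhs")
proof
  assume ?lhs
  then obtain \<alpha>' ys where y: "(\<alpha>', ys) \<in> lang_from \<delta> \<gamma>" and x: "(\<alpha>, xs) \<in> apply_gs S \<alpha>' ys"
    by (auto simp: apply_lang_def)
  from y consider "\<gamma> \<alpha>' = Accept" "ys = []"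
    | p q \<beta> zs where "\<gamma> \<alpha>' = Go p q" "ys = (p, \<beta>) # zs" "(\<beta>, zs) \<in> lang_from \<delta> (\<delta> q)"
    by (subst (asm) lang_from_unfold) (auto simp: step_lang_def)
  then show ?rhs
  proof cases
    case 1
    with x show ?thesis by simp
  next
    case (2 p q \<beta> zs)
    obtain w v where "w \<in> S p" "fst w = \<alpha>'" "last_atom w = \<beta>" "v \<in> apply_gs S \<beta> zs"
      "(\<alpha>, xs) = (\<alpha>', snd w @ snd v)"
      using x[unfolded 2(2) apply_gs_Cons_iff] by blast
    moreover from this 2 have "v \<in> apply_lang S (lang_from \<delta> (\<delta> q))"
      unfolding apply_lang_def by force
    ultimately show ?thesis
      using 2 apply_gs_fst[of v S \<beta> zs] by (auto simp: gconc_def gcomp_eq_Some_iff)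
  qed
next
  assume ?rhs
  then show ?lhs
  proof (elim disjE exE conjE)
    assume "\<gamma> \<alpha> = Accept" "xs = []"
    then have "(\<alpha>, []) \<in> lang_from \<delta> \<gamma>"
      by (simp add: lang_from_unfold[of \<delta> \<gamma>] step_lang_def)
    with \<open>xs = []\<close> show ?lhs
      by (force simp: apply_lang_def)
  next
    fix p q
    assume go: "\<gamma> \<alpha> = Go p q" and "(\<alpha>, xs) \<in> gconc (S p) (apply_lang S (lang_from \<delta> (\<delta> q)))"
    then obtain w \<beta> zs v where w: "w \<in> S p" and y: "(\<beta>, zs) \<in> lang_from \<delta> (\<delta> q)"
      and v: "v \<in> apply_gs S \<beta> zs" and wv: "gcomp w v = Some (\<alpha>, xs)"
      by (auto simp: gconc_def apply_lang_def)
    from wv have "fst w = \<alpha>" "last_atom w = \<beta>" "xs = snd w @ snd v"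
      using apply_gs_fst[OF v] by (auto simp: gcomp_eq_Some_iff)
    with w v have "(\<alpha>, xs) \<in> apply_gs S \<alpha> ((p, \<beta>) # zs)"
      unfolding apply_gs_Cons_iff by blast
    moreover have "(\<alpha>, (p, \<beta>) # zs) \<in> lang_from \<delta> \<gamma>"
      using go y by (simp add: lang_from_unfold[of \<delta> \<gamma>] step_lang_def)
    ultimately show ?lhs
      by (force simp: apply_lang_def)
  qed
qed

lemma lang_from_Accept: "\<gamma> \<alpha> = Accept \<Longrightarrow> (\<alpha>, xs) \<in> lang_from \<delta> \<gamma> \<longleftrightarrow> xs = []"
  by (simp add: lang_from_unfold[of \<delta> \<gamma>] step_lang_def)

lemma apply_lang_lang_from_cong:
  "\<gamma> \<alpha> = \<gamma>' \<alpha> \<Longrightarrow>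
     (\<alpha>, xs) \<in> apply_lang S (lang_from \<delta> \<gamma>) \<longleftrightarrow> (\<alpha>, xs) \<in> apply_lang S (lang_from \<delta> \<gamma>')"
  by (simp add: apply_lang_lang_from_iff)

lemma apply_lang_lang_from_skip:
  assumes "\<gamma> \<alpha> = Go p q" and "S p = lang_from \<delta>' \<iota>'" and "\<iota>' \<alpha> = Accept"
  shows "(\<alpha>, xs) \<in> apply_lang S (lang_from \<delta> \<gamma>) \<longleftrightarrow> (\<alpha>, xs) \<in> apply_lang S (lang_from \<delta> (\<delta> q))"
  using assms gconc_lang_from_iff[of \<alpha> xs \<delta>' \<iota>'] by (simp add: apply_lang_lang_from_iff)

abbreviation applied :: "('s0, 'q, 't) kat_aut \<Rightarrow> ('s0 \<Rightarrow> ('s1, 'r, 't) kat_aut)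
    \<Rightarrow> ('t set \<Rightarrow> ('s0, 'q) res) \<Rightarrow> ('s1, 't) gstr set" where
  "applied A s \<gamma> \<equiv> apply_lang (\<lambda>p. lang (s p)) (lang_from (aut_delta A) \<gamma>)"

lemma hat_rel_functional: "hat_rel A s q \<alpha> r \<Longrightarrow> hat_rel A s q \<alpha> r' \<Longrightarrow> r = r'"
proof (induction arbitrary: r' rule: hat_rel.induct)
  case (h_acc q \<alpha>)
  from h_acc.prems show ?case by cases (use h_acc.hyps in simp_all)
next
  case (h_go q \<alpha> p q')
  from h_go.prems show ?case by cases (use h_go.hyps in simp_all)
next
  case (h_skip q \<alpha> p q' r)
  from h_skip.prems show ?case
  proof cases
    case (h_skip p2 q2)
    then show ?thesis using \<open>aut_delta A q \<alpha> = Go p q'\<close> h_skip.IH by simp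
  qed (use h_skip.hyps in simp_all)
next
  case (h_rej q \<alpha>)
  from h_rej.prems show ?case by cases (use h_rej.hyps in simp_all)
qed

lemma hat_rel_no_skip: "hat_rel A s q \<alpha> (Go p q') \<Longrightarrow> aut_iota (s p) \<alpha> \<noteq> Accept"
  by (induction q \<alpha> "Go p q'" rule: hat_rel.induct) auto

lemma hat_rel_applied:
  "hat_rel A s q \<alpha> r \<Longrightarrow> (\<alpha>, xs) \<in> applied A s (aut_delta A q) \<longleftrightarrow> (\<alpha>, xs) \<in> applied A s (\<lambda>_. r)"
proof (induction rule: hat_rel.induct)
  case (h_skip q \<alpha> p q' r)
  have "(\<alpha>, xs) \<in> applied A s (aut_delta A q) \<longleftrightarrow> (\<alpha>, xs) \<in> applied A s (aut_delta A q')"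
    using h_skip.hyps(1,2)
    by (intro apply_lang_lang_from_skip[where \<delta>' = "aut_delta (s p)" and \<iota>' = "aut_iota (s p)"])
      (simp_all add: lang_def)
  with h_skip.IH show ?case by simp
qed (rule apply_lang_lang_from_cong; simp)+

lemma hat_rel_exists:
  "(\<alpha>, ys) \<in> lang_from (aut_delta A) (aut_delta A q) \<Longrightarrow> x \<in> apply_gs (\<lambda>p. lang (s p)) \<alpha> ys
     \<Longrightarrow> \<exists>r. hat_rel A s q \<alpha> r"
proof (induction ys arbitrary: \<alpha> q x)
  case Nil
  then show ?case
    by (auto simp: lang_from_unfold[of _ "aut_delta A q"] step_lang_def intro: hat_rel.h_acc)
next
  case (Cons y ys)
  obtain p \<beta> where y: "y = (p, \<beta>)" by (cases y)
  with Cons.prems(1) obtain q' where go: "aut_delta A q \<alpha> = Go p q'"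
    and tail: "(\<beta>, ys) \<in> lang_from (aut_delta A) (aut_delta A q')"
    by (auto simp: lang_from_unfold[of _ "aut_delta A q"] step_lang_def)
  show ?case
  proof (cases "aut_iota (s p) \<alpha> = Accept")
    case False
    with go show ?thesis by (blast intro: hat_rel.h_go)
  next
    case True
    obtain w v where w: "w \<in> lang (s p)" "fst w = \<alpha>" "last_atom w = \<beta>"
      and v: "v \<in> apply_gs (\<lambda>p. lang (s p)) \<beta> ys"
      using Cons.prems(2)[unfolded y apply_gs_Cons_iff] by blast
    from w True have "w = (\<alpha>, [])"
      by (cases w) (simp add: lang_def lang_from_Accept)
    with w have "\<beta> = \<alpha>" by simp
    with Cons.IH[OF tail v] obtain r where "hat_rel A s q' \<alpha> r" by blast
    with go True show ?thesis by (blast intro: hat_rel.h_skip)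
  qed
qed

lemma hat_delta_eqI: "hat_rel A s q \<alpha> r \<Longrightarrow> hat_delta A s q \<alpha> = r"
  unfolding hat_delta_def by (auto intro: the_equality hat_rel_functional)

lemma applied_hat_delta:
  "(\<alpha>, xs) \<in> applied A s (aut_delta A q) \<longleftrightarrow> (\<alpha>, xs) \<in> applied A s (\<lambda>_. hat_delta A s q \<alpha>)"
proof (cases "\<exists>r. hat_rel A s q \<alpha> r")
  case True
  then obtain r where "hat_rel A s q \<alpha> r" ..
  then show ?thesis
    using hat_rel_applied hat_delta_eqI by metis
next
  case False
  have "(\<alpha>, xs) \<notin> applied A s (aut_delta A q)"
  proof
    assume "(\<alpha>, xs) \<in> applied A s (aut_delta A q)"
    then obtain \<alpha>' ys where y: "(\<alpha>', ys) \<in> lang_from (aut_delta A) (aut_delta A q)"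
      and x: "(\<alpha>, xs) \<in> apply_gs (\<lambda>p. lang (s p)) \<alpha>' ys"
      by (auto simp: apply_lang_def)
    moreover from x have "\<alpha>' = \<alpha>"
      by (metis apply_gs_fst fst_conv)
    ultimately show False
      using False hat_rel_exists[OF y x] by blast
  qed
  moreover from False have "hat_delta A s q \<alpha> = Reject"
    by (simp add: hat_delta_def)
  ultimately show ?thesis
    by (simp add: apply_lang_lang_from_iff)
qed

lemma hat_delta_no_skip: "hat_delta A s q \<alpha> = Go p q' \<Longrightarrow> aut_iota (s p) \<alpha> \<noteq> Accept"
proof -
  assume go: "hat_delta A s q \<alpha> = Go p q'"
  then obtain r where "hat_rel A s q \<alpha> r"
    by (auto simp: hat_delta_def split: if_splits)
  with go have "hat_rel A s q \<alpha> (Go p q')"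
    by (simp add: hat_delta_eqI)
  then show ?thesis
    by (rule hat_rel_no_skip)
qed

lemma hat_iota_no_skip: "hat_iota A s \<alpha> = Go p q' \<Longrightarrow> aut_iota (s p) \<alpha> \<noteq> Accept"
  by (auto simp: hat_iota_def split: res.splits if_splits dest: hat_delta_no_skip)

lemma applied_hat_iota:
  "(\<alpha>, xs) \<in> applied A s (aut_iota A) \<longleftrightarrow> (\<alpha>, xs) \<in> applied A s (\<lambda>_. hat_iota A s \<alpha>)"
proof (cases "\<exists>p q. aut_iota A \<alpha> = Go p q \<and> aut_iota (s p) \<alpha> = Accept")
  case True
  then obtain p q where go: "aut_iota A \<alpha> = Go p q" and acc: "aut_iota (s p) \<alpha> = Accept"
    by blast
  then have "(\<alpha>, xs) \<in> applied A s (aut_iota A) \<longleftrightarrow> (\<alpha>, xs) \<in> applied A s (aut_delta A q)"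
    by (intro apply_lang_lang_from_skip[where \<delta>' = "aut_delta (s p)" and \<iota>' = "aut_iota (s p)"])
      (simp_all add: lang_def)
  also have "\<dots> \<longleftrightarrow> (\<alpha>, xs) \<in> applied A s (\<lambda>_. hat_iota A s \<alpha>)"
    using go acc applied_hat_delta[where q = q] by (simp add: hat_iota_def)
  finally show ?thesis .
next
  case False
  then have "hat_iota A s \<alpha> = aut_iota A \<alpha>"
    by (auto simp: hat_iota_def split: res.split)
  then show ?thesis
    by (intro apply_lang_lang_from_cong) simp
qed

definition enter :: "('s0 \<Rightarrow> ('s1, 'r, 't) kat_aut) \<Rightarrow> ('s0, 'q) res \<Rightarrow> 't set
    \<Rightarrow> ('s1, 's0 \<times> 'r \<times> 'q) res" where
  "enter s r \<alpha> = (case r of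
      Accept \<Rightarrow> Accept
    | Go p q \<Rightarrow> (case aut_iota (s p) \<alpha> of Go p' qp \<Rightarrow> Go p' (p, qp, q) | _ \<Rightarrow> Reject)
    | Reject \<Rightarrow> Reject)"

lemma aut_iota_compose: "aut_iota (compose s A) \<alpha> = enter s (hat_iota A s \<alpha>) \<alpha>"
  by (simp add: compose_def enter_def split: res.split)

lemma aut_delta_compose:
  "aut_delta (compose s A) (p, qp, q) \<alpha> = (case aut_delta (s p) qp \<alpha> of
      Go p' qp' \<Rightarrow> Go p' (p, qp', q)
    | Accept \<Rightarrow> enter s (hat_delta A s q \<alpha>) \<alpha>
    | Reject \<Rightarrow> Reject)"
  by (simp add: compose_def enter_def split: res.split)

definition resume_lang :: "('s0 \<Rightarrow> ('s1, 'r, 't) kat_aut) \<Rightarrow> ('s0, 'q, 't) kat_aut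
    \<Rightarrow> 's0 \<times> 'r \<times> 'q \<Rightarrow> ('s1, 't) gstr set" where
  "resume_lang s A = (\<lambda>(p, qp, q).
     gconc (lang_from (aut_delta (s p)) (aut_delta (s p) qp)) (applied A s (aut_delta A q)))"

lemma applied_const_iff_enter:
  assumes no_skip: "\<And>p q. r = Go p q \<Longrightarrow> aut_iota (s p) \<alpha> \<noteq> Accept"
  shows "(\<alpha>, xs) \<in> applied A s (\<lambda>_. r) \<longleftrightarrow> (\<alpha>, xs) \<in> step_lang (\<lambda>_. enter s r \<alpha>) (resume_lang s A)"
proof (cases r)
  case (Go p q)
  then have "(\<alpha>, xs) \<in> applied A s (\<lambda>_. r) \<longleftrightarrow>
      (\<alpha>, xs) \<in> gconc (lang_from (aut_delta (s p)) (aut_iota (s p))) (applied A s (aut_delta A q))"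
    by (simp add: apply_lang_lang_from_iff lang_def)
  with Go no_skip show ?thesis
    using gconc_lang_from_iff[of \<alpha> xs "aut_delta (s p)" "aut_iota (s p)"]
    by (auto simp: enter_def step_lang_def resume_lang_def split: res.split)
qed (simp_all add: apply_lang_lang_from_iff enter_def step_lang_def)

lemma resume_lang_unfold:
  "resume_lang s A st = step_lang (aut_delta (compose s A) st) (resume_lang s A)"
proof -
  obtain p qp q where st: "st = (p, qp, q)"
    by (cases st) auto
  have "(\<alpha>, xs) \<in> resume_lang s A (p, qp, q) \<longleftrightarrow>
      (\<alpha>, xs) \<in> step_lang (aut_delta (compose s A) (p, qp, q)) (resume_lang s A)" for \<alpha> xs
  proof (cases "aut_delta (s p) qp \<alpha>")
    case Accept
    then have "(\<alpha>, xs) \<in> resume_lang s A (p, qp, q) \<longleftrightarrow> (\<alpha>, xs) \<in> applied A s (aut_delta A q)"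
      using gconc_lang_from_iff[of \<alpha> xs "aut_delta (s p)" "aut_delta (s p) qp"]
      by (simp add: resume_lang_def)
    also have "\<dots> \<longleftrightarrow> (\<alpha>, xs) \<in> applied A s (\<lambda>_. hat_delta A s q \<alpha>)"
      by (rule applied_hat_delta)
    also have "\<dots> \<longleftrightarrow> (\<alpha>, xs) \<in> step_lang (\<lambda>_. enter s (hat_delta A s q \<alpha>) \<alpha>) (resume_lang s A)"
      using hat_delta_no_skip by (rule applied_const_iff_enter)
    also have "\<dots> \<longleftrightarrow> (\<alpha>, xs) \<in> step_lang (aut_delta (compose s A) (p, qp, q)) (resume_lang s A)"
      using Accept by (intro step_lang_cong) (simp add: aut_delta_compose)
    finally show ?thesis .
  qed (use gconc_lang_from_iff[of \<alpha> xs "aut_delta (s p)" "aut_delta (s p) qp"] in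
        \<open>auto simp: resume_lang_def step_lang_def aut_delta_compose\<close>)
  then show ?thesis
    unfolding st by auto
qed

lemma lang_from_compose:
  "lang_from (aut_delta (compose s A)) (aut_delta (compose s A) st) = resume_lang s A st"
  by (rule lang_from_unique) (rule resume_lang_unfold)

theorem proposition6p12:
  fixes A :: "('s0::finite, 'q, 't::finite) kat_aut"
    and s :: "'s0 \<Rightarrow> ('s1::finite, 'r, 't) kat_aut"
  assumes "wf_aut A"
    and "\<forall>p. wf_aut (s p)"
  shows "lang (compose s A) = apply_lang (\<lambda>p. lang (s p)) (lang A)"
proof (rule set_eqI)
  fix x :: "('s1, 't) gstr"
  obtain \<alpha> xs where x: "x = (\<alpha>, xs)"
    by (cases x)
  have "x \<in> lang (compose s A) \<longleftrightarrow> (\<alpha>, xs) \<in> step_lang (aut_iota (compose s A)) (resume_lang s A)"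
    unfolding x lang_def by (subst lang_from_unfold) (simp add: lang_from_compose)
  also have "\<dots> \<longleftrightarrow> (\<alpha>, xs) \<in> step_lang (\<lambda>_. enter s (hat_iota A s \<alpha>) \<alpha>) (resume_lang s A)"
    by (intro step_lang_cong) (simp add: aut_iota_compose)
  also have "\<dots> \<longleftrightarrow> (\<alpha>, xs) \<in> applied A s (\<lambda>_. hat_iota A s \<alpha>)"
    using hat_iota_no_skip by (rule applied_const_iff_enter[symmetric])
  also have "\<dots> \<longleftrightarrow> (\<alpha>, xs) \<in> applied A s (aut_iota A)"
    by (rule applied_hat_iota[symmetric])
  finally show "x \<in> lang (compose s A) \<longleftrightarrow> x \<in> apply_lang (\<lambda>p. lang (s p)) (lang A)"
    by (simp add: x lang_def)
qed

end
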